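(* Let $F_1,F_2$ be continuous cumulative distribution functions of nonnegative random variables with the same finite mean $\mu>0$, each strictly increasing on the set where it lies strictly between $0$ and $1$, with Lorenz curves $LC_1,LC_2$. Suppose $LC_1(p)\ge LC_2(p)$ for all $p\in[0,1]$. Let $m>1$ and $0<r<m\mu$, and for $i=1,2$ let $\tau_i$ solve $m\int_0^{\tau_i}x\,dF_i(x)=r$ and $\theta_i$ solve $\int_{\theta_i}^\infty x\,dF_i(x)=r/m$. Then $$F_1(\tau_1)\le F_2(\tau_2)\quad\text{and}\quad 1-F_1(\theta_1)\ge 1-F_2(\theta_2).$$ Consequently the sets $\{m>1: 1/m<1-F_i(\theta_i)\}$ and $\{m>1: 1/m>F_i(\tau_i)\}$ (with $r,\mu$ fixed and $\tau_i,\theta_i$ depending on $m$) are each larger (in the sense of inclusion) for $i=1$ than for $i=2$.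
   Context: The Lorenz curve of a distribution $F$ with mean $\mu$ is $LC(p)=\frac{1}{\mu}\int_0^p F^{-1}(t)\,dt$, $p\in[0,1]$, with $F^{-1}$ the quantile function. Interpretation: $1/m<1-F(\theta)$ means the strongest-first society can survive (hence every society form can), and $1/m>F(\tau)$ means the weakest-first society dies out almost surely (hence every society form does), in the resource dependent branching process model with mean offspring $m$ and mean individual production $r$. *)

theory Defs
  imports "HOL-Probability.Probability"
begin

text \<open>Quantile function (generalised inverse) of a distribution function F:
  F^{-1}(t) = inf {x. F x \<ge> t}.  (At t = 0 the value is irrelevant:
  it is a single point of Lebesgue measure zero.)\<close>
definition quantile :: "(real \<Rightarrow> real) \<Rightarrow> real \<Rightarrow> real" where
  "quantile F t = Inf {x. t \<le> F x}"

definition lorenz :: "real measure \<Rightarrow> real \<Rightarrow> real" where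
  "lorenz M p = (1 / (LINT x|M. x)) *
      (LBINT t=0..p. quantile (cdf M) t)"

end

theory Submission imports Defs begin

text \<open>Represent a distribution as the image of the uniform distribution on (0,1) under its
  quantile function. For a continuous distribution this turns every partial mean
  \<open>E[X; X \<le> y]\<close> into \<open>GL(F y)\<close>, where \<open>GL p = \<integral>\<^sub>0\<^sup>p F\<^sup>-\<^sup>1\<close> is the generalised Lorenz curve
  \<open>\<mu> \<cdot> LC p\<close>. The defining equations of \<open>\<tau>\<^sub>i\<close> and \<open>\<theta>\<^sub>i\<close> then both read
  \<open>GL\<^sub>1(F\<^sub>1 x\<^sub>1) = GL\<^sub>2(F\<^sub>2 x\<^sub>2)\<close>; since \<open>GL\<^sub>2 \<le> GL\<^sub>1\<close> and \<open>GL\<^sub>1\<close> is strictly increasing, this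
  forces \<open>F\<^sub>1 x\<^sub>1 \<le> F\<^sub>2 x\<^sub>2\<close>. The inclusions of parameter sets follow because such levels
  can always be attained, \<open>GL\<^sub>1 \<circ> F\<^sub>1\<close> being continuous with range containing \<open>[0, \<mu>)\<close>.\<close>

text \<open>The quantile is cut off outside (0,1), where it is the junk \<open>Inf\<close> of an empty or
  unbounded set.\<close>
definition unit_quantile :: "real measure \<Rightarrow> real \<Rightarrow> real" where
  "unit_quantile M t = indicator {0<..<1} t * quantile (cdf M) t"

definition generalized_lorenz :: "real measure \<Rightarrow> real \<Rightarrow> real" where
  "generalized_lorenz M p = (LBINT t:{0..p}. unit_quantile M t)"

lemma level_le_of_dominated_eq:
  fixes L L' :: "real \<Rightarrow> real"
  assumes dom: "\<forall>p\<in>{0..1}. L' p \<le> L p"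
    and smono: "\<And>a b. 0 \<le> a \<Longrightarrow> a < b \<Longrightarrow> b \<le> 1 \<Longrightarrow> L a < L b"
    and "0 \<le> p" "p \<le> 1" "0 \<le> q" "q \<le> 1" and eq: "L p = L' q"
  shows "p \<le> q"
proof (rule ccontr)
  assume "\<not> p \<le> q"
  then have "L q < L p" using smono[of q p] assms by auto
  moreover have "L' q \<le> L q" using dom assms by auto
  ultimately show False using eq by simp
qed

lemma nonneg_of_set_integral_Icc_neq_zero:
  fixes M :: "real measure"
  shows "(LINT x:{0..\<tau>}|M. f x) \<noteq> 0 \<Longrightarrow> 0 \<le> \<tau>"
  by (rule ccontr) (simp add: set_lebesgue_integral_def)

locale nonneg_cdf_distribution = cdf_distribution +
  assumes nonneg: "AE x in M. 0 \<le> x"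
    and continuous_cdf: "continuous_on UNIV (cdf M)"
    and integrable_id: "integrable M (\<lambda>x. x)"
begin

abbreviation "\<Omega> \<equiv> restrict_space lborel {0<..<1::real}"

lemma quantile_cdf_eq: "quantile (cdf M) = I"
  by (simp add: quantile_def fun_eq_iff)

lemma measurable_I_uniform: "I \<in> measurable \<Omega> borel"
proof -
  have "measurable \<Omega> borel = measurable (restrict_space borel {0<..<1::real}) borel"
    by (rule measurable_cong_sets) (auto simp: sets_restrict_space)
  then show ?thesis using measurable_CI by simp
qed

lemma integral_eq_uniform_quantile:
  fixes g :: "real \<Rightarrow> real"
  assumes "g \<in> borel_measurable borel"
  shows "(LINT x|M. g x) = (LINT t|lborel. indicator {0<..<1} t * g (I t))"
proof -
  have "(LINT x|M. g x) = integral\<^sup>L (distr \<Omega> borel I) g"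
    using distr_I_eq_M by simp
  also have "\<dots> = integral\<^sup>L \<Omega> (\<lambda>t. g (I t))"
    by (rule integral_distr[OF measurable_I_uniform assms])
  also have "\<dots> = (LINT t|lborel. indicator {0<..<1} t * g (I t))"
    by (subst integral_restrict_space) auto
  finally show ?thesis .
qed

lemma integrable_unit_quantile: "integrable lborel (unit_quantile M)"
proof -
  have "integrable (distr \<Omega> borel I) (\<lambda>x. x)" using integrable_id distr_I_eq_M by simp
  then have "integrable \<Omega> I"
    using integrable_distr_eq[OF measurable_I_uniform, of "\<lambda>x. x"] by simp
  then have "integrable lborel (\<lambda>t. indicator {0<..<1::real} t *\<^sub>R I t)"
    by (subst integrable_restrict_space[symmetric]) auto
  then show ?thesis unfolding unit_quantile_def quantile_cdf_eq by simp
qed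

lemma set_integrable_unit_quantile: "A \<in> sets lborel \<Longrightarrow> set_integrable lborel A (unit_quantile M)"
  unfolding set_integrable_def by (rule integrable_mult_indicator[OF _ integrable_unit_quantile])

lemma measure_singleton: "measure M {x} = 0"
  using continuous_cdf isCont_cdf continuous_on_eq_continuous_at by blast

lemma cdf_zero: "cdf M 0 = 0"
proof -
  have "AE x in M. x \<notin> {..<0::real}" using nonneg by auto
  then have "emeasure M {..<0} = 0"
    by (subst AE_iff_measurable[symmetric, of _ _ "\<lambda>x. \<not> x < 0"]) auto
  then have neg: "measure M {..<0} = 0" by (simp add: measure_def)
  have "cdf M 0 = measure M ({..<0} \<union> {0})" by (simp add: cdf_def2 ivl_disj_un(2)[symmetric])
  also have "\<dots> \<le> measure M {..<0} + measure M {0}" by (rule measure_Un_le) auto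
  finally show ?thesis using neg measure_singleton cdf_nonneg[of 0] by simp
qed

lemma I_pos: "0 < t \<Longrightarrow> t < 1 \<Longrightarrow> 0 < I t"
  using pseudoinverse[of t 0] cdf_zero by auto

lemma unit_quantile_nonneg: "0 \<le> unit_quantile M t"
  unfolding unit_quantile_def quantile_cdf_eq using I_pos by (auto simp: indicator_def less_imp_le)

lemma set_integral_atMost_eq: "(LINT x:{..y}|M. x) = generalized_lorenz M (cdf M y)"
proof -
  have "(LINT x:{..y}|M. x) = (LINT t|lborel. indicator {0<..<1} t * (indicator {..y} (I t) * I t))"
    unfolding set_lebesgue_integral_def by (simp add: integral_eq_uniform_quantile)
  also have "\<dots> = (LINT t|lborel. indicator {0..cdf M y} t *\<^sub>R unit_quantile M t)"
  proof (rule Bochner_Integration.integral_cong[OF refl])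
    fix t :: real
    show "indicator {0<..<1} t * (indicator {..y} (I t) * I t)
        = indicator {0..cdf M y} t *\<^sub>R unit_quantile M t"
    proof (cases "0 < t \<and> t < 1")
      case True
      then have "t \<le> cdf M y \<longleftrightarrow> I t \<le> y" using pseudoinverse[of t y] by blast
      then show ?thesis using True by (simp add: indicator_def unit_quantile_def quantile_cdf_eq)
    qed (auto simp: indicator_def unit_quantile_def)
  qed
  finally show ?thesis unfolding generalized_lorenz_def set_lebesgue_integral_def .
qed

lemma mean_eq: "(LINT x|M. x) = generalized_lorenz M 1"
proof -
  have "(LINT x|M. x) = (LINT t|lborel. indicator {0<..<1} t * I t)"
    by (simp add: integral_eq_uniform_quantile)
  also have "\<dots> = (LINT t|lborel. indicator {0..1} t *\<^sub>R unit_quantile M t)"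
    by (rule Bochner_Integration.integral_cong[OF refl])
      (auto simp: unit_quantile_def quantile_cdf_eq indicator_def)
  finally show ?thesis unfolding generalized_lorenz_def set_lebesgue_integral_def .
qed

lemma lorenz_eq:
  assumes "0 \<le> p" "p \<le> 1"
  shows "lorenz M p = generalized_lorenz M p / generalized_lorenz M 1"
proof -
  have "(LBINT t=0..p. quantile (cdf M) t) = (LBINT t:{0<..<p}. quantile (cdf M) t)"
    using assms by (subst interval_integral_Ioo) auto
  also have "\<dots> = (LBINT t:{0<..<p}. unit_quantile M t)"
    by (rule set_lebesgue_integral_cong) (use assms in \<open>auto simp: unit_quantile_def\<close>)
  also have "\<dots> = (LBINT t=0..p. unit_quantile M t)"
    using assms by (subst interval_integral_Ioo) auto
  also have "\<dots> = generalized_lorenz M p"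
    using assms interval_integral_Icc[of 0 p "unit_quantile M"]
    unfolding generalized_lorenz_def by (simp add: zero_ereal_def)
  finally show ?thesis unfolding lorenz_def mean_eq by simp
qed

lemma generalized_lorenz_zero: "generalized_lorenz M 0 = 0"
  using interval_integral_Icc[of 0 0 "unit_quantile M"]
  unfolding generalized_lorenz_def by (simp add: zero_ereal_def)

lemma continuous_generalized_lorenz: "continuous_on UNIV (generalized_lorenz M)"
  unfolding generalized_lorenz_def[abs_def]
  by (rule continuous_on_LBINT) (simp add: set_integrable_unit_quantile)

text \<open>The quantile is positive on (0,1), so every subinterval contributes positive mass.\<close>
lemma generalized_lorenz_strict_mono:
  assumes "0 \<le> a" "a < b" "b \<le> 1"
  shows "generalized_lorenz M a < generalized_lorenz M b"
proof -
  define c where "c = (a + b) / 2"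
  have c: "0 < c" "c < 1" "a < c" "c < b" using assms by (auto simp: c_def)
  have split: "generalized_lorenz M b = generalized_lorenz M a + (LBINT t:{a<..b}. unit_quantile M t)"
  proof -
    have "{0..b} = {0..a} \<union> {a<..b}" using assms by auto
    then show ?thesis unfolding generalized_lorenz_def
      by (simp only:) (rule set_integral_Un, auto intro: set_integrable_unit_quantile)
  qed
  have "(LBINT t:{c<..<b}. I c) \<le> (LBINT t:{a<..b}. unit_quantile M t)"
    unfolding set_lebesgue_integral_def
  proof (rule integral_mono)
    show "integrable lborel (\<lambda>t. indicator {c<..<b} t *\<^sub>R I c)"
      using c by (intro integrable_scaleR_left integrable_real_indicator)
        (auto simp: emeasure_lborel_Ioo)
    show "integrable lborel (\<lambda>t. indicator {a<..b} t *\<^sub>R unit_quantile M t)"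
      using set_integrable_unit_quantile[of "{a<..b}"] by (simp add: set_integrable_def)
    fix t :: real
    show "indicator {c<..<b} t *\<^sub>R I c \<le> indicator {a<..b} t *\<^sub>R unit_quantile M t"
    proof (cases "c < t \<and> t < b")
      case True
      then have "I c \<le> I t" using mono_I c assms unfolding mono_on_def by auto
      then show ?thesis
        using True c assms by (simp add: indicator_def unit_quantile_def quantile_cdf_eq)
    qed (use unit_quantile_nonneg[of t] in \<open>auto simp: indicator_def\<close>)
  qed
  moreover have "(LBINT t:{c<..<b}. I c) = (b - c) * I c"
    using c by (subst set_integral_const) auto
  moreover have "0 < (b - c) * I c" using c I_pos by simp
  ultimately show ?thesis using split by linarith
qed

lemma set_integral_Icc_eq:
  assumes "0 \<le> \<tau>"
  shows "(LINT x:{0..\<tau>}|M. x) = generalized_lorenz M (cdf M \<tau>)"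
proof -
  have "(LINT x:{0..\<tau>}|M. x) = (LINT x:{..\<tau>}|M. x)"
  proof (rule set_integral_cong_set)
    show "AE x in M. (x \<in> {..\<tau>}) = (x \<in> {0..\<tau>})" using nonneg by eventually_elim auto
  qed (auto simp: set_borel_measurable_def)
  then show ?thesis using set_integral_atMost_eq by simp
qed

lemma set_integral_atLeast_eq:
  "(LINT x:{\<theta>..}|M. x) = generalized_lorenz M 1 - generalized_lorenz M (cdf M \<theta>)"
proof -
  have "emeasure M {\<theta>} = 0" using measure_singleton by (simp add: emeasure_eq_measure)
  then have "AE x in M. x \<noteq> \<theta>" by (subst AE_iff_measurable[of "{\<theta>}"]) auto
  then have lower: "(LINT x:{..<\<theta>}|M. x) = (LINT x:{..\<theta>}|M. x)"
    by (intro set_integral_cong_set) (auto simp: set_borel_measurable_def elim: AE_mp)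
  have "integrable M (\<lambda>x. indicator {..<\<theta>} x *\<^sub>R x)"
    by (rule integrable_mult_indicator[OF _ integrable_id]) auto
  then have "(LINT x|M. x - indicator {..<\<theta>} x *\<^sub>R x) = (LINT x|M. x) - (LINT x:{..<\<theta>}|M. x)"
    unfolding set_lebesgue_integral_def by (rule Bochner_Integration.integral_diff[OF integrable_id])
  moreover have "(LINT x:{\<theta>..}|M. x) = (LINT x|M. x - indicator {..<\<theta>} x *\<^sub>R x)"
    unfolding set_lebesgue_integral_def
    by (rule Bochner_Integration.integral_cong[OF refl]) (auto simp: indicator_def)
  ultimately show ?thesis using mean_eq lower set_integral_atMost_eq by simp
qed

lemma generalized_lorenz_cdf_attains:
  assumes "0 < c" "c < generalized_lorenz M 1"
  shows "\<exists>x\<ge>0. generalized_lorenz M (cdf M x) = c"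
proof -
  obtain p where p: "0 \<le> p" "p \<le> 1" "generalized_lorenz M p = c"
    using IVT'[of "generalized_lorenz M" 0 c 1] assms generalized_lorenz_zero
      continuous_generalized_lorenz continuous_on_subset by fastforce
  have "p < 1" using p assms by (cases "p = 1") auto
  then obtain b where b: "\<And>x. x \<ge> b \<Longrightarrow> p < cdf M x"
    using order_tendstoD(1)[OF cdf_lim_at_top_prob] by (auto simp: eventually_at_top_linorder)
  then have "p < cdf M (max b 0)" by simp
  then obtain x where "0 \<le> x" "cdf M x = p"
    using IVT'[of "cdf M" 0 p "max b 0"] cdf_zero p continuous_cdf continuous_on_subset
    by fastforce
  then show ?thesis using p by auto
qed

end

locale lorenz_dominance =
  D1: nonneg_cdf_distribution M1 + D2: nonneg_cdf_distribution M2
  for M1 M2 :: "real measure" +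
  fixes \<mu> :: real
  assumes mean1: "(LINT x|M1. x) = \<mu>" and mean2: "(LINT x|M2. x) = \<mu>"
    and mean_pos: "0 < \<mu>"
    and dominates: "\<forall>p\<in>{0..1}. lorenz M1 p \<ge> lorenz M2 p"
begin

lemma generalized_lorenz_one: "generalized_lorenz M1 1 = \<mu>" "generalized_lorenz M2 1 = \<mu>"
  using D1.mean_eq D2.mean_eq mean1 mean2 by simp_all

lemma cdf_le_of_generalized_lorenz_eq:
  assumes "generalized_lorenz M1 (cdf M1 x) = generalized_lorenz M2 (cdf M2 y)"
  shows "cdf M1 x \<le> cdf M2 y"
proof (rule level_le_of_dominated_eq[where L = "generalized_lorenz M1" and L' = "generalized_lorenz M2"])
  show "\<forall>p\<in>{0..1}. generalized_lorenz M2 p \<le> generalized_lorenz M1 p"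
    using dominates D1.lorenz_eq D2.lorenz_eq generalized_lorenz_one mean_pos
    by (auto simp: divide_le_cancel)
qed (auto simp: assms D1.generalized_lorenz_strict_mono
    D1.cdf_nonneg D2.cdf_nonneg D1.cdf_bounded_prob D2.cdf_bounded_prob)

lemma extinction_level_le:
  assumes "0 < r" "0 < m"
    and "m * (LINT x:{0..\<tau>1}|M1. x) = r" "m * (LINT x:{0..\<tau>2}|M2. x) = r"
  shows "cdf M1 \<tau>1 \<le> cdf M2 \<tau>2"
proof -
  have "0 \<le> \<tau>1"
    by (rule nonneg_of_set_integral_Icc_neq_zero[of M1 _ "\<lambda>x. x"]) (use assms in auto)
  moreover have "0 \<le> \<tau>2"
    by (rule nonneg_of_set_integral_Icc_neq_zero[of M2 _ "\<lambda>x. x"]) (use assms in auto)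
  ultimately have "m * generalized_lorenz M1 (cdf M1 \<tau>1) = m * generalized_lorenz M2 (cdf M2 \<tau>2)"
    using assms D1.set_integral_Icc_eq D2.set_integral_Icc_eq by simp
  then show ?thesis using \<open>0 < m\<close> by (intro cdf_le_of_generalized_lorenz_eq) simp
qed

lemma survival_level_le:
  assumes "(LINT x:{\<theta>1..}|M1. x) = s" "(LINT x:{\<theta>2..}|M2. x) = s"
  shows "cdf M1 \<theta>1 \<le> cdf M2 \<theta>2"
  using assms D1.set_integral_atLeast_eq D2.set_integral_atLeast_eq generalized_lorenz_one
  by (intro cdf_le_of_generalized_lorenz_eq) simp

lemma survival_parameters_mono:
  assumes "0 < r" "1 < m" "r < m * \<mu>"
    and \<theta>2: "(LINT x:{\<theta>2..}|M2. x) = r / m" "1 / m < 1 - cdf M2 \<theta>2"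
  shows "\<exists>\<theta>. (LINT x:{\<theta>..}|M1. x) = r / m \<and> 1 / m < 1 - cdf M1 \<theta>"
proof -
  have "0 < \<mu> - r / m" "\<mu> - r / m < generalized_lorenz M1 1"
    using assms generalized_lorenz_one by (auto simp: field_simps)
  then obtain \<theta> where "generalized_lorenz M1 (cdf M1 \<theta>) = \<mu> - r / m"
    using D1.generalized_lorenz_cdf_attains by blast
  then have \<theta>1: "(LINT x:{\<theta>..}|M1. x) = r / m"
    using D1.set_integral_atLeast_eq generalized_lorenz_one by simp
  then show ?thesis using survival_level_le[OF \<theta>1 \<theta>2(1)] \<theta>2(2) by force
qed

lemma extinction_parameters_mono:
  assumes "0 < r" "1 < m" "r < m * \<mu>"
    and \<tau>2: "m * (LINT x:{0..\<tau>2}|M2. x) = r" "cdf M2 \<tau>2 < 1 / m"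
  shows "\<exists>\<tau>. m * (LINT x:{0..\<tau>}|M1. x) = r \<and> cdf M1 \<tau> < 1 / m"
proof -
  have "0 < r / m" "r / m < generalized_lorenz M1 1"
    using assms generalized_lorenz_one by (auto simp: field_simps)
  then obtain \<tau> where "0 \<le> \<tau>" "generalized_lorenz M1 (cdf M1 \<tau>) = r / m"
    using D1.generalized_lorenz_cdf_attains by blast
  then have \<tau>1: "m * (LINT x:{0..\<tau>}|M1. x) = r"
    using D1.set_integral_Icc_eq assms(2) by simp
  then show ?thesis
    using extinction_level_le[OF assms(1) _ \<tau>1 \<tau>2(1)] \<tau>2(2) assms(2) by force
qed

end

theorem mainTheorem3:
  fixes M1 M2 :: "real measure" and \<mu> r :: real
  assumes dist1: "real_distribution M1" and dist2: "real_distribution M2"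
    and nonneg1: "AE x in M1. 0 \<le> x" and nonneg2: "AE x in M2. 0 \<le> x"
    and cont1: "continuous_on UNIV (cdf M1)" and cont2: "continuous_on UNIV (cdf M2)"
    and smono1: "strict_mono_on {x. 0 < cdf M1 x \<and> cdf M1 x < 1} (cdf M1)"
    and smono2: "strict_mono_on {x. 0 < cdf M2 x \<and> cdf M2 x < 1} (cdf M2)"
    and int1: "integrable M1 (\<lambda>x. x)" and int2: "integrable M2 (\<lambda>x. x)"
    and mean1: "(LINT x|M1. x) = \<mu>" and mean2: "(LINT x|M2. x) = \<mu>"
    and mu_pos: "0 < \<mu>"
    and LC: "\<forall>p\<in>{0..1}. lorenz M1 p \<ge> lorenz M2 p"
    and r_pos: "0 < r"
  shows "(\<forall>m \<tau>1 \<tau>2 \<theta>1 \<theta>2. 1 < m \<and> r < m * \<mu>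
            \<and> m * (LINT x:{0..\<tau>1}|M1. x) = r \<and> m * (LINT x:{0..\<tau>2}|M2. x) = r
            \<and> (LINT x:{\<theta>1..}|M1. x) = r / m \<and> (LINT x:{\<theta>2..}|M2. x) = r / m
          \<longrightarrow> cdf M1 \<tau>1 \<le> cdf M2 \<tau>2 \<and> 1 - cdf M1 \<theta>1 \<ge> 1 - cdf M2 \<theta>2)
      \<and> {m. 1 < m \<and> r < m * \<mu> \<and> (\<exists>\<theta>. (LINT x:{\<theta>..}|M2. x) = r / m \<and> 1 / m < 1 - cdf M2 \<theta>)}
        \<subseteq> {m. 1 < m \<and> r < m * \<mu> \<and> (\<exists>\<theta>. (LINT x:{\<theta>..}|M1. x) = r / m \<and> 1 / m < 1 - cdf M1 \<theta>)}
      \<and> {m. 1 < m \<and> r < m * \<mu> \<and> (\<exists>\<tau>. m * (LINT x:{0..\<tau>}|M2. x) = r \<and> 1 / m > cdf M2 \<tau>)}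
        \<subseteq> {m. 1 < m \<and> r < m * \<mu> \<and> (\<exists>\<tau>. m * (LINT x:{0..\<tau>}|M1. x) = r \<and> 1 / m > cdf M1 \<tau>)}"
proof -
  interpret lorenz_dominance M1 M2 \<mu>
    using assms by (simp add: lorenz_dominance_def lorenz_dominance_axioms_def
      nonneg_cdf_distribution_def nonneg_cdf_distribution_axioms_def cdf_distribution_def)
  have levels: "cdf M1 \<tau>1 \<le> cdf M2 \<tau>2 \<and> 1 - cdf M1 \<theta>1 \<ge> 1 - cdf M2 \<theta>2"
    if "1 < m" "m * (LINT x:{0..\<tau>1}|M1. x) = r" "m * (LINT x:{0..\<tau>2}|M2. x) = r"
      "(LINT x:{\<theta>1..}|M1. x) = r / m" "(LINT x:{\<theta>2..}|M2. x) = r / m"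
    for m \<tau>1 \<tau>2 \<theta>1 \<theta>2
    using extinction_level_le[OF r_pos _ that(2,3)] survival_level_le[OF that(4,5)] that(1)
    by simp
  show ?thesis
    by (intro conjI allI impI subsetI)
      (use levels survival_parameters_mono[OF r_pos] extinction_parameters_mono[OF r_pos] in blast)+
qed

end
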